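(* Let $n\ge2$, let $p>2$ be prime, $M=(p-1)/2$, and let $\delta,R>0$ satisfy $R\le n/\delta$, $\frac{n-1}{\delta^2}+n\left(\frac{R}{\delta}+\frac14\right)\le M$, and $|\tilde z_j^{(i)}|\le R$ for all $i,j$. Then the Approximate Correlation Protocol reveals no more than the Exact Correlation Protocol run with the same parameters: for each $i\in\{1,2\}$ there is a simulator $\mathcal{S}$ which, given the view of $P_i$ in an execution of the Exact Correlation Protocol on inputs $(\mathbf{x}^{(1)},\mathbf{x}^{(2)})$, outputs a transcript that is perfectly indistinguishable from (identically distributed to) the view of $P_i$ in an execution of the Approximate Correlation Protocol on the same inputs.
   Context: Fixed-point encoding: for a prime $p>2$, $M=(p-1)/2$, and $\delta>0$, let $\mathbb{Q}_{(M,\delta)}=\{x\delta : x\in\mathbb{Z},\ -M\le x\le M\}$ and $\varphi_\delta:\mathbb{Q}_{(M,\delta)}\to\mathbb{F}_p$, $\varphi_\delta(x\delta)=x\bmod p$ (a bijection); $\varphi_\delta^{-1}(y)=\delta\psi(y)$ where, representing $y$ by an integer in $\{0,\dots,p-1\}$, $\psi(y)=y$ if $y\le M$ and $\psi(y)=y-p$ otherwise. Data: $P_i$ ($i=1,2$) holds real samples $x_1^{(i)},\dots,x_n^{(i)}$ (not all equal), with mean $\bar x^{(i)}$, $s^{(i)}=\sqrt{\frac{1}{n-1}\sum_j(x_j^{(i)}-\bar x^{(i)})^2}$, $z_j^{(i)}=(x_j^{(i)}-\bar x^{(i)})/s^{(i)}$; $\tilde z_j^{(i)}$ is a nearest element of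 $\mathbb{Q}_{(M,\delta)}$ to $z_j^{(i)}$ and $\varepsilon_j^{(i)}=z_j^{(i)}-\tilde z_j^{(i)}$. Additive sharing $[x]$ of $x\in\mathbb{F}_p$: shares $[x]_1+[x]_2=x$, one chosen uniformly at random. Beaver triples (from an ideal functionality): sharings $[u],[v],[w]$ with $u,v$ uniform and $w=uv$; to multiply $[x],[y]$, open $x-u,y-v$ and set $[z]_1=[w]_1+[u]_1(y-v)+[v]_1(x-u)+(x-u)(y-v)$, $[z]_2=[w]_2+[u]_2(y-v)+[v]_2(x-u)$. Exact Correlation Protocol: (1) $P_i$ computes $z_j^{(i)},\tilde z_j^{(i)},\varepsilon_j^{(i)}$ and sends $(\varepsilon_j^{(i)})_j$ to $P_{3-i}$; (2) $P_i$ sends $\sum_j z_j^{(i)}\varepsilon_j^{(3-i)}$ to $P_{3-i}$; (3) $P_i$ creates and distributes sharings $[\varphi_\delta(\tilde z_j^{(i)})]$ for each $j$; (4) the participants compute $[a]=\sum_j[\varphi_\delta(\tilde z_j^{(1)})][\varphi_\delta(\tilde z_j^{(2)})]$ with one Beaver triple per product; (5) they exchange shares of $a$ and recover $a$; (6) they output $\frac1{n-1}\big(\varphi_{\delta^2}^{-1}(a)+\sum_{i}\sum_j z_j^{(i)}\varepsilon_j^{(3-i)}-\sum_j\varepsilon_j^{(1)}\varepsilon_j^{(2)}\big)$. Approximate Correlation Protocol: (1) $P_i$ computes $z_j^{(i)}$ and $\tilde z_j^{(i)}$; (2) $P_i$ creates and distributes sharings $[\varphi_\delta(\tilde z_j^{(i)})]$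 for each $j$; (3) the participants compute $[a]=\sum_j[\varphi_\delta(\tilde z_j^{(1)})][\varphi_\delta(\tilde z_j^{(2)})]$ with one Beaver triple per product and local addition; (4) $P_i$ reveals $[a]_i$, and each participant reconstructs $a$ and outputs $\varphi_{\delta^2}^{-1}(a)/(n-1)$. The participants are passively corrupted (honest-but-curious); the view of $P_i$ is its input together with everything it receives during the protocol (shares, opened values, Beaver triple shares). *)

theory Defs
  imports "HOL-Probability.Probability_Mass_Function"
begin

text \<open>Elements of F_p are represented by integers in {0..<p}; arithmetic is modulo p.\<close>

definition fp_M :: "int \<Rightarrow> int" where
  "fp_M p = (p - 1) div 2"

definition Qset :: "int \<Rightarrow> real \<Rightarrow> real set" where
  "Qset M \<delta> = {real_of_int x * \<delta> | x. - M \<le> x \<and> x \<le> M}"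

definition phi_enc :: "int \<Rightarrow> real \<Rightarrow> real \<Rightarrow> int" where
  "phi_enc p \<delta> q = (THE x::int. - fp_M p \<le> x \<and> x \<le> fp_M p \<and> real_of_int x * \<delta> = q) mod p"

definition psi_dec :: "int \<Rightarrow> int \<Rightarrow> int" where
  "psi_dec p y = (if y \<le> fp_M p then y else y - p)"

definition phi_dec :: "int \<Rightarrow> real \<Rightarrow> int \<Rightarrow> real" where
  "phi_dec p \<delta> y = \<delta> * real_of_int (psi_dec p y)"

definition smean :: "real list \<Rightarrow> real" where
  "smean xs = sum_list xs / real (length xs)"

definition ssd :: "real list \<Rightarrow> real" where
  "ssd xs = sqrt ((\<Sum>x\<leftarrow>xs. (x - smean xs)^2) / (real (length xs) - 1))"

definition zscores :: "real list \<Rightarrow> real list" where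
  "zscores xs = map (\<lambda>x. (x - smean xs) / ssd xs) xs"

definition is_nearest :: "int \<Rightarrow> real \<Rightarrow> real \<Rightarrow> real \<Rightarrow> bool" where
  "is_nearest M \<delta> z q \<longleftrightarrow> q \<in> Qset M \<delta> \<and> (\<forall>q'\<in>Qset M \<delta>. \<bar>z - q\<bar> \<le> \<bar>z - q'\<bar>)"

text \<open>Per index j the randomness is (r1, r2, u, v, su, sv, sw): r_c is the uniform first
  share of the sharing of party c's encoded input; u, v the Beaver triple values; su, sv, sw the
  uniform first shares of the sharings of u, v, w = u v.\<close>

type_synonym rnd = "int \<times> int \<times> int \<times> int \<times> int \<times> int \<times> int"

definition rand_space :: "int \<Rightarrow> nat \<Rightarrow> rnd list set" where
  "rand_space p n = (let F = {0..<p} in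
     {rs. length rs = n \<and> set rs \<subseteq> F \<times> F \<times> F \<times> F \<times> F \<times> F \<times> F})"

definition share :: "int \<Rightarrow> nat \<Rightarrow> int \<Rightarrow> int \<Rightarrow> int" where
  "share p k x r = (if k = 1 then r else (x - r) mod p)"

definition input_share :: "int \<Rightarrow> nat \<Rightarrow> nat \<Rightarrow> int \<Rightarrow> rnd \<Rightarrow> int" where
  "input_share p k c a \<rho> = (case \<rho> of (r1, r2, u, v, su, sv, sw) \<Rightarrow>
      share p k a (if c = 1 then r1 else r2))"

definition triple_share :: "int \<Rightarrow> nat \<Rightarrow> rnd \<Rightarrow> int \<times> int \<times> int" where
  "triple_share p k \<rho> = (case \<rho> of (r1, r2, u, v, su, sv, sw) \<Rightarrow>
      (share p k u su, share p k v sv, share p k ((u * v) mod p) sw))"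

definition opened :: "int \<Rightarrow> int \<Rightarrow> int \<Rightarrow> rnd \<Rightarrow> int \<times> int" where
  "opened p a b \<rho> = (case \<rho> of (r1, r2, u, v, su, sv, sw) \<Rightarrow> ((a - u) mod p, (b - v) mod p))"

text \<open>Share k of the product, by the Beaver formula.\<close>
definition prod_share :: "int \<Rightarrow> nat \<Rightarrow> int \<Rightarrow> int \<Rightarrow> rnd \<Rightarrow> int" where
  "prod_share p k a b \<rho> = (case opened p a b \<rho> of (d, e) \<Rightarrow>
      (case triple_share p k \<rho> of (uk, vk, wk) \<Rightarrow>
        (wk + uk * e + vk * d + (if k = 1 then d * e else 0)) mod p))"

definition a_share :: "int \<Rightarrow> real \<Rightarrow> real list \<Rightarrow> real list \<Rightarrow> rnd list \<Rightarrow> nat \<Rightarrow> int" where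
  "a_share p \<delta> tz1 tz2 rs k =
     (\<Sum>j<length rs. prod_share p k (phi_enc p \<delta> (tz1 ! j)) (phi_enc p \<delta> (tz2 ! j)) (rs ! j)) mod p"

text \<open>Approximate protocol, view of P_i: input, received shares of the other party's encoded
  inputs, own Beaver triple shares, opened values, the other party's share of a.\<close>
type_synonym approx_view = "real list \<times> int list \<times> (int \<times> int \<times> int) list \<times> (int \<times> int) list \<times> int"

text \<open>Exact protocol, view of P_i: input, received epsilons of the other party, received
  cross sum, then the same items as above.\<close>
type_synonym exact_view =
  "real list \<times> real list \<times> real \<times> int list \<times> (int \<times> int \<times> int) list \<times> (int \<times> int) list \<times> int"

definition approx_view ::
  "int \<Rightarrow> real \<Rightarrow> real list \<Rightarrow> real list \<Rightarrow> real list \<Rightarrow> real list \<Rightarrow> nat \<Rightarrow> rnd list \<Rightarrow> approx_view" where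
  "approx_view p \<delta> x1 x2 tz1 tz2 i rs =
    (let n = length rs; c = 3 - i;
         xi = (if i = 1 then x1 else x2);
         enc1 = (\<lambda>j. phi_enc p \<delta> (tz1 ! j));
         enc2 = (\<lambda>j. phi_enc p \<delta> (tz2 ! j));
         enco = (if c = 1 then enc1 else enc2)
     in (xi,
         map (\<lambda>j. input_share p i c (enco j) (rs ! j)) [0..<n],
         map (\<lambda>j. triple_share p i (rs ! j)) [0..<n],
         map (\<lambda>j. opened p (enc1 j) (enc2 j) (rs ! j)) [0..<n],
         a_share p \<delta> tz1 tz2 rs c))"

definition exact_view ::
  "int \<Rightarrow> real \<Rightarrow> real list \<Rightarrow> real list \<Rightarrow> real list \<Rightarrow> real list \<Rightarrow> nat \<Rightarrow> rnd list \<Rightarrow> exact_view" where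
  "exact_view p \<delta> x1 x2 tz1 tz2 i rs =
    (let n = length rs; c = 3 - i;
         xi = (if i = 1 then x1 else x2);
         xo = (if c = 1 then x1 else x2);
         tzi = (if i = 1 then tz1 else tz2);
         tzo = (if c = 1 then tz1 else tz2);
         epsi = map2 (-) (zscores xi) tzi;
         epso = map2 (-) (zscores xo) tzo;
         cross = (\<Sum>j<n. zscores xo ! j * epsi ! j);
         enc1 = (\<lambda>j. phi_enc p \<delta> (tz1 ! j));
         enc2 = (\<lambda>j. phi_enc p \<delta> (tz2 ! j));
         enco = (if c = 1 then enc1 else enc2)
     in (xi, epso, cross,
         map (\<lambda>j. input_share p i c (enco j) (rs ! j)) [0..<n],
         map (\<lambda>j. triple_share p i (rs ! j)) [0..<n],
         map (\<lambda>j. opened p (enc1 j) (enc2 j) (rs ! j)) [0..<n],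
         a_share p \<delta> tz1 tz2 rs c))"

definition approx_view_dist ::
  "int \<Rightarrow> real \<Rightarrow> nat \<Rightarrow> real list \<Rightarrow> real list \<Rightarrow> real list \<Rightarrow> real list \<Rightarrow> nat \<Rightarrow> approx_view pmf" where
  "approx_view_dist p \<delta> n x1 x2 tz1 tz2 i =
     map_pmf (approx_view p \<delta> x1 x2 tz1 tz2 i) (pmf_of_set (rand_space p n))"

definition exact_view_dist ::
  "int \<Rightarrow> real \<Rightarrow> nat \<Rightarrow> real list \<Rightarrow> real list \<Rightarrow> real list \<Rightarrow> real list \<Rightarrow> nat \<Rightarrow> exact_view pmf" where
  "exact_view_dist p \<delta> n x1 x2 tz1 tz2 i =
     map_pmf (exact_view p \<delta> x1 x2 tz1 tz2 i) (pmf_of_set (rand_space p n))"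

definition valid_input :: "int \<Rightarrow> real \<Rightarrow> nat \<Rightarrow> real list \<Rightarrow> real list \<Rightarrow> bool" where
  "valid_input p \<delta> n xs tz \<longleftrightarrow> length xs = n \<and> length tz = n \<and>
     (\<exists>j<n. \<exists>k<n. xs ! j \<noteq> xs ! k) \<and>
     (\<forall>j<n. is_nearest (fp_M p) \<delta> (zscores xs ! j) (tz ! j))"

end

theory Submission
  imports Defs
begin

text \<open>On the same randomness, the view of a party in the approximate protocol is the view in the
  exact protocol with the received errors and the received cross sum removed. Hence the simulator
  simply forgets these two components.\<close>

definition forget_exact_extras :: "exact_view \<Rightarrow> approx_view" where
  "forget_exact_extras =
     (\<lambda>(x, eps, cross, shares, triples, openings, a). (x, shares, triples, openings, a))"

lemma forget_exact_extras_exact_view: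
  "forget_exact_extras (exact_view p \<delta> x1 x2 tz1 tz2 i rs) = approx_view p \<delta> x1 x2 tz1 tz2 i rs"
  unfolding forget_exact_extras_def exact_view_def approx_view_def Let_def by simp

lemma map_pmf_forget_exact_view_dist:
  "map_pmf forget_exact_extras (exact_view_dist p \<delta> n x1 x2 tz1 tz2 i)
     = approx_view_dist p \<delta> n x1 x2 tz1 tz2 i"
  unfolding exact_view_dist_def approx_view_dist_def pmf.map_comp
  by (simp add: comp_def forget_exact_extras_exact_view)

theorem proposition3:
  fixes p :: int and n :: nat and \<delta> R :: real
  assumes "prime p" and "p > 2" and "n \<ge> 2" and "\<delta> > 0" and "R > 0"
    and "R \<le> real n / \<delta>"
    and "(real n - 1) / \<delta>^2 + real n * (R / \<delta> + 1/4) \<le> real_of_int (fp_M p)"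
  shows "\<forall>i\<in>{1, 2::nat}. \<exists>S :: exact_view \<Rightarrow> approx_view pmf.
           \<forall>x1 x2 tz1 tz2.
             valid_input p \<delta> n x1 tz1 \<and> valid_input p \<delta> n x2 tz2 \<and>
             (\<forall>j<n. \<bar>tz1 ! j\<bar> \<le> R \<and> \<bar>tz2 ! j\<bar> \<le> R) \<longrightarrow>
             bind_pmf (exact_view_dist p \<delta> n x1 x2 tz1 tz2 i) S
               = approx_view_dist p \<delta> n x1 x2 tz1 tz2 i"
proof (intro ballI exI allI impI)
  fix i x1 x2 tz1 tz2
  show "bind_pmf (exact_view_dist p \<delta> n x1 x2 tz1 tz2 i) (\<lambda>v. return_pmf (forget_exact_extras v))
          = approx_view_dist p \<delta> n x1 x2 tz1 tz2 i"
    using map_pmf_forget_exact_view_dist by (simp add: map_pmf_def)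
qed

end
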